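(* Let $G$ be a locally finite discrete group and $1<p<\infty$, and suppose the set $B_1=\{f\in\ell^1(G):\|f\|_{A_p(G)}\le 1\}$ is bounded in the $\ell^1$-norm. Then $G$ is finite.
   Context: A group is locally finite if every finitely generated subgroup is finite. For a discrete group $G$ and $1<p<\infty$, $\frac1p+\frac1q=1$, $A_p(G)$ is the space of functions $u=\sum_{i=1}^\infty g_i*f_i^{\vee}$ with $f_i\in \ell_p(G)$, $g_i\in \ell_q(G)$, $\sum_i\|f_i\|_p\|g_i\|_q<\infty$, where $f^{\vee}(x)=f(x^{-1})$, normed by $\|u\|_{A_p(G)}=\inf\{\sum_i\|f_i\|_p\|g_i\|_q\}$ over all such representations; $\ell^1(G)\subseteq A_p(G)$. *)

theory Defs
  imports "HOL-Analysis.Analysis" "HOL-Algebra.Generated_Groups"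
begin

definition locally_finite_group :: "('a, 'b) monoid_scheme \<Rightarrow> bool" where
  "locally_finite_group G \<longleftrightarrow>
     (\<forall>S. S \<subseteq> carrier G \<longrightarrow> finite S \<longrightarrow> finite (generate G S))"

text \<open>Functions on the (discrete) group, complex valued; only values on the carrier matter.\<close>
definition in_lp :: "('a, 'b) monoid_scheme \<Rightarrow> real \<Rightarrow> ('a \<Rightarrow> complex) \<Rightarrow> bool" where
  "in_lp G p f \<longleftrightarrow> (\<lambda>x. norm (f x) powr p) summable_on carrier G"

definition lp_norm :: "('a, 'b) monoid_scheme \<Rightarrow> real \<Rightarrow> ('a \<Rightarrow> complex) \<Rightarrow> real" where
  "lp_norm G p f = (\<Sum>\<^sub>\<infinity>x\<in>carrier G. norm (f x) powr p) powr (1 / p)"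

definition check_fun :: "('a, 'b) monoid_scheme \<Rightarrow> ('a \<Rightarrow> complex) \<Rightarrow> 'a \<Rightarrow> complex" where
  "check_fun G f x = f (inv\<^bsub>G\<^esub> x)"

definition conv :: "('a, 'b) monoid_scheme \<Rightarrow> ('a \<Rightarrow> complex) \<Rightarrow> ('a \<Rightarrow> complex) \<Rightarrow> 'a \<Rightarrow> complex" where
  "conv G g h x = (\<Sum>\<^sub>\<infinity>y\<in>carrier G. g y * h (inv\<^bsub>G\<^esub> y \<otimes>\<^bsub>G\<^esub> x))"

definition Ap_rep :: "('a, 'b) monoid_scheme \<Rightarrow> real \<Rightarrow> ('a \<Rightarrow> complex)
    \<Rightarrow> (nat \<Rightarrow> 'a \<Rightarrow> complex) \<Rightarrow> (nat \<Rightarrow> 'a \<Rightarrow> complex) \<Rightarrow> bool" where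
  "Ap_rep G p u f g \<longleftrightarrow>
     (let q = p / (p - 1) in
       (\<forall>i. in_lp G p (f i) \<and> in_lp G q (g i)) \<and>
       summable (\<lambda>i. lp_norm G p (f i) * lp_norm G q (g i)) \<and>
       (\<forall>x\<in>carrier G. u x = (\<Sum>i. conv G (g i) (check_fun G (f i)) x)))"

definition Ap_norm :: "('a, 'b) monoid_scheme \<Rightarrow> real \<Rightarrow> ('a \<Rightarrow> complex) \<Rightarrow> real" where
  "Ap_norm G p u = Inf {(\<Sum>i. lp_norm G p (f i) * lp_norm G (p / (p - 1)) (g i)) | f g. Ap_rep G p u f g}"

definition l1_norm :: "('a, 'b) monoid_scheme \<Rightarrow> ('a \<Rightarrow> complex) \<Rightarrow> real" where
  "l1_norm G f = (\<Sum>\<^sub>\<infinity>x\<in>carrier G. norm (f x))"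

end

theory Submission
  imports Defs
begin

text \<open>If \<open>G\<close> were infinite, local finiteness would give finite subgroups \<open>H\<close> of arbitrarily
  large order. The indicator \<open>1\<^sub>H\<close> factors as \<open>(|H|\<^sup>-\<^sup>1 1\<^sub>H) * 1\<^sub>H\<^sup>\<or>\<close>, so its \<open>A\<^sub>p\<close>-norm is at most
  \<open>|H|\<^sup>-\<^sup>1 |H|\<^sup>1\<^sup>/\<^sup>q |H|\<^sup>1\<^sup>/\<^sup>p = 1\<close>, while its \<open>\<ell>\<^sup>1\<close>-norm is \<open>|H|\<close>; this contradicts the boundedness of \<open>B\<^sub>1\<close>.\<close>

lemma finite_support_infsum:
  assumes "finite H" "H \<subseteq> A" "\<And>x. x \<in> A - H \<Longrightarrow> f x = 0"
  shows "infsum f A = sum f H"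
  using infsum_cong_neutral[of H A f f] assms by auto

lemma finite_support_summable_on:
  assumes "finite H" "H \<subseteq> A" "\<And>x. x \<in> A - H \<Longrightarrow> f x = 0"
  shows "f summable_on A"
  using summable_on_cong_neutral[of A H f f] assms by auto

lemma in_lp_finite_support:
  assumes "finite H" "H \<subseteq> carrier G" "p \<noteq> 0" "\<And>x. x \<notin> H \<Longrightarrow> f x = 0"
  shows "in_lp G p f"
  unfolding in_lp_def by (rule finite_support_summable_on[OF assms(1,2)]) (use assms in auto)

lemma lp_norm_nonneg: "0 \<le> lp_norm G p f"
  unfolding lp_norm_def by simp

lemma lp_norm_zero: "lp_norm G p (\<lambda>_. 0) = 0"
  unfolding lp_norm_def by simp

lemma lp_norm_scaled_indicator:
  assumes "finite H" "H \<subseteq> carrier G" "p > 0"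
  shows "lp_norm G p (\<lambda>x. c * indicator H x) = norm c * real (card H) powr (1 / p)"
proof -
  have "lp_norm G p (\<lambda>x. c * indicator H x) = (real (card H) * norm c powr p) powr (1 / p)"
    unfolding lp_norm_def
    by (subst finite_support_infsum[OF assms(1,2)]) (auto simp: indicator_def)
  also have "\<dots> = norm c * real (card H) powr (1 / p)"
    using assms(3) by (simp add: powr_mult powr_powr)
  finally show ?thesis .
qed

lemma suminf_single_zero:
  "(\<Sum>i::nat. if i = 0 then a else 0) = (a :: 'a::{t2_space, comm_monoid_add})"
  using sums_unique[OF sums_single[of 0 "\<lambda>_. a"]] by simp

lemma Ap_norm_conv_le:
  assumes "in_lp G p f" "in_lp G (p / (p - 1)) g"
    and "\<And>x. x \<in> carrier G \<Longrightarrow> u x = conv G g (check_fun G f) x"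
  shows "Ap_norm G p u \<le> lp_norm G p f * lp_norm G (p / (p - 1)) g"
proof -
  define fs where "fs = (\<lambda>i::nat. if i = 0 then f else (\<lambda>_. 0))"
  define gs where "gs = (\<lambda>i::nat. if i = 0 then g else (\<lambda>_. 0))"
  let ?q = "p / (p - 1)"
  have norms: "(\<lambda>i. lp_norm G p (fs i) * lp_norm G ?q (gs i))
      = (\<lambda>i. if i = 0 then lp_norm G p f * lp_norm G ?q g else 0)"
    by (auto simp: fs_def gs_def lp_norm_zero)
  have convs: "(\<lambda>i. conv G (gs i) (check_fun G (fs i)) x)
      = (\<lambda>i. if i = 0 then conv G g (check_fun G f) x else 0)" for x
    by (auto simp: fs_def gs_def conv_def)
  have "in_lp G r (\<lambda>_. 0)" for r
    unfolding in_lp_def by simp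
  then have "Ap_rep G p u fs gs"
    using assms unfolding Ap_rep_def Let_def norms convs
    by (auto simp: fs_def gs_def suminf_single_zero)
  moreover have "(\<Sum>i. lp_norm G p (fs i) * lp_norm G ?q (gs i)) = lp_norm G p f * lp_norm G ?q g"
    unfolding norms by (rule suminf_single_zero)
  ultimately have "lp_norm G p f * lp_norm G ?q g
      \<in> {(\<Sum>i. lp_norm G p (f i) * lp_norm G ?q (g i)) | f g. Ap_rep G p u f g}"
    by (intro CollectI exI[of _ fs] exI[of _ gs]) simp
  moreover have "bdd_below {(\<Sum>i. lp_norm G p (f i) * lp_norm G ?q (g i)) | f g. Ap_rep G p u f g}"
    by (rule bdd_belowI[where m = 0])
       (auto simp: Ap_rep_def Let_def intro!: suminf_nonneg mult_nonneg_nonneg lp_norm_nonneg)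
  ultimately show ?thesis
    unfolding Ap_norm_def by (rule cInf_lower)
qed

lemma (in group) inv_inv_mult_mem_iff:
  assumes "subgroup H G" "x \<in> carrier G" "y \<in> H"
  shows "inv (inv y \<otimes> x) \<in> H \<longleftrightarrow> x \<in> H"
proof -
  have y: "y \<in> carrier G"
    using assms subgroup.subset by blast
  have "inv (inv y \<otimes> x) = inv x \<otimes> y"
    using y assms(2) by (simp add: inv_mult_group)
  moreover have "inv x \<otimes> y \<in> H \<longleftrightarrow> inv x \<in> H"
    using assms y by (metis inv_closed r_inv r_one m_assoc subgroup.m_closed subgroup.m_inv_closed)
  ultimately show ?thesis
    using assms by (metis inv_inv subgroup.m_inv_closed)
qed

lemma (in group) conv_indicator_check_indicator:
  assumes "subgroup H G" "finite H" "x \<in> carrier G"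
  shows "conv G (\<lambda>y. c * indicator H y) (check_fun G (indicator H)) x
    = c * of_nat (card H) * indicator H x"
proof -
  have "H \<subseteq> carrier G"
    using assms(1) subgroup.subset by blast
  then have "conv G (\<lambda>y. c * indicator H y) (check_fun G (indicator H)) x
      = (\<Sum>y\<in>H. c * indicator H (inv (inv y \<otimes> x)))"
    unfolding conv_def check_fun_def
    by (subst finite_support_infsum[OF assms(2)]) auto
  also have "\<dots> = (\<Sum>y\<in>H. c * indicator H x)"
    using inv_inv_mult_mem_iff[OF assms(1,3)] by (intro sum.cong) (auto simp: indicator_def)
  finally show ?thesis
    by simp
qed

lemma (in group) Ap_norm_subgroup_indicator_le_1:
  assumes "subgroup H G" "finite H" "1 < p"
  shows "Ap_norm G p (indicator H) \<le> 1"
proof -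
  let ?q = "p / (p - 1)" and ?n = "real (card H)"
  have sub: "H \<subseteq> carrier G"
    using assms(1) subgroup.subset by blast
  have "card H \<noteq> 0"
    using assms subgroup.one_closed card_0_eq by blast
  then have n: "?n > 0"
    by simp
  have q: "?q > 0" "1 / p + 1 / ?q = 1"
    using assms(3) by (auto simp: field_simps)
  define c where "c = complex_of_real (1 / ?n)"
  have c: "c * of_nat (card H) = 1"
    using n by (simp add: c_def)
  have "Ap_norm G p (indicator H)
      \<le> lp_norm G p (indicator H) * lp_norm G ?q (\<lambda>x. c * indicator H x)"
  proof (rule Ap_norm_conv_le)
    show "in_lp G p (indicator H)" "in_lp G ?q (\<lambda>x. c * indicator H x)"
      using assms(3) q(1) by (auto intro!: in_lp_finite_support[OF assms(2) sub])
    show "indicator H x = conv G (\<lambda>y. c * indicator H y) (check_fun G (indicator H)) x"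
      if "x \<in> carrier G" for x
      using conv_indicator_check_indicator[OF assms(1,2) that, of c] c by simp
  qed
  also have "\<dots> = ?n powr (1 / p) * (?n powr (1 / ?q) / ?n)"
    using lp_norm_scaled_indicator[OF assms(2) sub, of p 1] assms(3)
      lp_norm_scaled_indicator[OF assms(2) sub q(1), of c] n
    by (simp add: c_def norm_divide)
  also have "\<dots> = ?n powr (1 / p + 1 / ?q) / ?n"
    by (simp add: powr_add)
  also have "\<dots> = 1"
    using n q(2) by simp
  finally show ?thesis .
qed

lemma l1_norm_indicator:
  assumes "finite H" "H \<subseteq> carrier G"
  shows "l1_norm G (indicator H) = real (card H)"
  unfolding l1_norm_def by (subst finite_support_infsum[OF assms]) auto

lemma (in group) locally_finite_obtains_large_subgroup:
  assumes "locally_finite_group G" "infinite (carrier G)"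
  obtains H where "subgroup H G" "finite H" "n \<le> card H"
proof -
  obtain S where S: "finite S" "card S = n" "S \<subseteq> carrier G"
    using infinite_arbitrarily_large[OF assms(2)] by blast
  have "finite (generate G S)"
    using assms(1) S unfolding locally_finite_group_def by blast
  moreover have "n \<le> card (generate G S)"
    using S card_mono[OF \<open>finite (generate G S)\<close>] generate.incl[of _ S G] by blast
  ultimately show ?thesis
    using that generate_is_subgroup[OF S(3)] by blast
qed

theorem corollary3p8:
  fixes G :: "('a, 'b) monoid_scheme" and p :: real
  assumes "group G"
    and "locally_finite_group G"
    and "1 < p"
    and "\<exists>C. \<forall>f. in_lp G 1 f \<and> Ap_norm G p f \<le> 1 \<longrightarrow> l1_norm G f \<le> C"
  shows "finite (carrier G)"
proof (rule ccontr)
  interpret group G by fact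
  assume "infinite (carrier G)"
  obtain C where C: "\<And>f. in_lp G 1 f \<Longrightarrow> Ap_norm G p f \<le> 1 \<Longrightarrow> l1_norm G f \<le> C"
    using assms(4) by blast
  obtain H where H: "subgroup H G" "finite H" "nat \<lceil>C\<rceil> + 1 \<le> card H"
    using locally_finite_obtains_large_subgroup[OF assms(2) \<open>infinite (carrier G)\<close>] .
  have sub: "H \<subseteq> carrier G"
    using H(1) subgroup.subset by blast
  have "real (card H) \<le> C"
    using C[of "indicator H"] l1_norm_indicator[OF H(2) sub]
      Ap_norm_subgroup_indicator_le_1[OF H(1,2) assms(3)]
      in_lp_finite_support[OF H(2) sub, of 1 "indicator H"]
    by simp
  with H(3) show False
    by linarith
qed

end
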